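(* Let $\mathcal{T}$ be a projective Fraïssé family of finite graphs that allows splitting edges, and let $\mathbb{G}$ be its projective Fraïssé limit. Then $\mathbb{G}$ is a prespace, i.e. the edge relation of $\mathbb{G}$ is an equivalence relation.
   Context: A graph $G$ is a set of vertices $V(G)$ with an edge set $E(G)\subseteq V(G)^2$ that is reflexive ($\langle a,a\rangle\in E(G)$ for all $a$) and symmetric. A topological graph is a graph with a compact, Hausdorff, zero-dimensional, second countable topology on $V(G)$ such that $E(G)$ is closed in $V(G)^2$; finite graphs carry the discrete topology. An epimorphism $g\colon B\to A$ of topological graphs is a continuous surjection such that for all $a_1,a_2\in A$: $\langle a_1,a_2\rangle\in E(A)$ iff there are $b_1\in g^{-1}(a_1)$, $b_2\in g^{-1}(a_2)$ with $\langle b_1,b_2\rangle\in E(B)$. A projective Fraïssé family is a class $\mathcal{F}$ of finite graphs together with a distinguished class of epimorphisms between them such that: there are countably many members up to isomorphism; the distinguished epimorphisms contain the identities and are closed under composition; (joint projection) for all $A,B\in\mathcal{F}$ there is $C\in\mathcal{F}$ with distinguished epimorphisms $C\to A$, $C\to B$; (projective amalgamation) for all distinguished $f\colon B\to A$, $g\colon C\to A$ there are $D\in\mathcal{F}$ and distinguished $h\colon D\to B$, $k\colon D\to C$ with $f\circ h=g\circ k$. A Fraïssé sequence for $\mathcal{F}$ is a sequence $(F_n)_{n<\omega}$ in $\mathcal{F}$ with distinguished epimorphisms $f^m_n\colon F_m\to F_n$ ($m\ge n$, compatible under composition) such that every $A\in\mathcal F$ admits a distinguished epimorphism $F_n\to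 A$ for some $n$, and for every distinguished epimorphism $f\colon A\to F_m$ there are $n\ge m$ and a distinguished $g\colon F_n\to A$ with $f\circ g=f^n_m$. Fraïssé sequences exist, and the projective Fraïssé limit $\mathbb{G}$ of $\mathcal{F}$ is (up to isomorphism) the inverse limit $\varprojlim F_n\subseteq\prod_n F_n$ with the product topology, where $\langle x,y\rangle\in E(\mathbb{G})$ iff $\langle x_n,y_n\rangle\in E(F_n)$ for all $n$. The family $\mathcal{T}$ allows splitting edges if for every $G\in\mathcal{T}$ and distinct $a,b\in V(G)$ with $\langle a,b\rangle\in E(G)$, the graph $H$ with $V(H)=V(G)\sqcup\{\ast\}$ whose nontrivial edges are those of $G$ except $\{a,b\}$, together with $\{a,\ast\}$ and $\{\ast,b\}$, belongs to $\mathcal{T}$, and the two maps $H\to G$ sending $\ast$ to $a$ (respectively to $b$) and fixing all other vertices are distinguished epimorphisms of $\mathcal{T}$. *)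

theory Defs
  imports Main
begin

text \<open>A graph is a pair (V, E): a vertex set and a reflexive, symmetric edge relation on it.
  Finite graphs carry the discrete topology, so no topology is needed for members of the family.\<close>

type_synonym 'a graph = "'a set \<times> ('a \<times> 'a) set"

definition verts :: "'a graph \<Rightarrow> 'a set" where "verts G = fst G"
definition edges :: "'a graph \<Rightarrow> ('a \<times> 'a) set" where "edges G = snd G"

definition finite_graph :: "'a graph \<Rightarrow> bool" where
  "finite_graph G \<longleftrightarrow> finite (verts G) \<and> edges G \<subseteq> verts G \<times> verts G
     \<and> (\<forall>a\<in>verts G. (a, a) \<in> edges G)
     \<and> (\<forall>a b. (a, b) \<in> edges G \<longrightarrow> (b, a) \<in> edges G)"

text \<open>Epimorphism g : B \<rightarrow> A of finite graphs (continuity is automatic for discrete spaces).\<close>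
definition epimorphism :: "('a \<Rightarrow> 'a) \<Rightarrow> 'a graph \<Rightarrow> 'a graph \<Rightarrow> bool" where
  "epimorphism g B A \<longleftrightarrow> g ` verts B = verts A
     \<and> (\<forall>a1\<in>verts A. \<forall>a2\<in>verts A. (a1, a2) \<in> edges A \<longleftrightarrow>
          (\<exists>b1\<in>verts B. \<exists>b2\<in>verts B. g b1 = a1 \<and> g b2 = a2 \<and> (b1, b2) \<in> edges B))"

text \<open>A projective Fraisse family: a class T of finite graphs with a distinguished class of
  epimorphisms, D B A f meaning "f : B \<rightarrow> A is distinguished". Maps are compared on the
  vertex set of their domain.\<close>
definition proj_fraisse_family ::
  "'a graph set \<Rightarrow> ('a graph \<Rightarrow> 'a graph \<Rightarrow> ('a \<Rightarrow> 'a) \<Rightarrow> bool) \<Rightarrow> bool" where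
  "proj_fraisse_family T D \<longleftrightarrow>
     (\<forall>G\<in>T. finite_graph G)
   \<and> (\<forall>B A f. D B A f \<longrightarrow> B \<in> T \<and> A \<in> T \<and> epimorphism f B A)
   \<and> (\<forall>A\<in>T. D A A id)
   \<and> (\<forall>C B A g f. D C B g \<longrightarrow> D B A f \<longrightarrow> D C A (f \<circ> g))
   \<and> (\<forall>A\<in>T. \<forall>B\<in>T. \<exists>C\<in>T. (\<exists>f. D C A f) \<and> (\<exists>g. D C B g))
   \<and> (\<forall>A B C f g. D B A f \<longrightarrow> D C A g \<longrightarrow>
        (\<exists>E\<in>T. \<exists>h k. D E B h \<and> D E C k \<and> (\<forall>x\<in>verts E. f (h x) = g (k x))))"

definition split_edge :: "'a graph \<Rightarrow> 'a \<Rightarrow> 'a \<Rightarrow> 'a \<Rightarrow> 'a graph" where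
  "split_edge G a b s =
     (insert s (verts G),
      (edges G - {(a, b), (b, a)}) \<union> {(a, s), (s, a), (s, b), (b, s), (s, s)})"

definition allows_splitting_edges ::
  "'a graph set \<Rightarrow> ('a graph \<Rightarrow> 'a graph \<Rightarrow> ('a \<Rightarrow> 'a) \<Rightarrow> bool) \<Rightarrow> bool" where
  "allows_splitting_edges T D \<longleftrightarrow>
     (\<forall>G\<in>T. \<forall>a\<in>verts G. \<forall>b\<in>verts G. a \<noteq> b \<longrightarrow> (a, b) \<in> edges G \<longrightarrow>
        (\<exists>s. s \<notin> verts G \<and> split_edge G a b s \<in> T
           \<and> D (split_edge G a b s) G (\<lambda>v. if v = s then a else v)
           \<and> D (split_edge G a b s) G (\<lambda>v. if v = s then b else v)))"

definition fraisse_sequence ::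
  "'a graph set \<Rightarrow> ('a graph \<Rightarrow> 'a graph \<Rightarrow> ('a \<Rightarrow> 'a) \<Rightarrow> bool)
   \<Rightarrow> (nat \<Rightarrow> 'a graph) \<Rightarrow> (nat \<Rightarrow> nat \<Rightarrow> 'a \<Rightarrow> 'a) \<Rightarrow> bool" where
  "fraisse_sequence T D F fs \<longleftrightarrow>
     (\<forall>n. F n \<in> T)
   \<and> (\<forall>m n. n \<le> m \<longrightarrow> D (F m) (F n) (fs m n))
   \<and> (\<forall>m n k. k \<le> n \<longrightarrow> n \<le> m \<longrightarrow> (\<forall>x\<in>verts (F m). fs n k (fs m n x) = fs m k x))
   \<and> (\<forall>A\<in>T. \<exists>n f. D (F n) A f)
   \<and> (\<forall>A m f. D A (F m) f \<longrightarrow>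
        (\<exists>n\<ge>m. \<exists>g. D (F n) A g \<and> (\<forall>x\<in>verts (F n). f (g x) = fs n m x)))"

definition lim_verts :: "(nat \<Rightarrow> 'a graph) \<Rightarrow> (nat \<Rightarrow> nat \<Rightarrow> 'a \<Rightarrow> 'a) \<Rightarrow> (nat \<Rightarrow> 'a) set" where
  "lim_verts F fs = {x. (\<forall>n. x n \<in> verts (F n)) \<and> (\<forall>m n. n \<le> m \<longrightarrow> fs m n (x m) = x n)}"

definition lim_edges :: "(nat \<Rightarrow> 'a graph) \<Rightarrow> (nat \<Rightarrow> nat \<Rightarrow> 'a \<Rightarrow> 'a) \<Rightarrow> ((nat \<Rightarrow> 'a) \<times> (nat \<Rightarrow> 'a)) set" where
  "lim_edges F fs = {(x, y). x \<in> lim_verts F fs \<and> y \<in> lim_verts F fs \<and> (\<forall>n. (x n, y n) \<in> edges (F n))}"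

end

theory Submission
  imports Defs
begin

text \<open>Reflexivity and symmetry of the limit edge relation are inherited from the finite levels.
  For transitivity, suppose x -- y -- z in the limit but x(n) and z(n) are not adjacent in F(n).
  Split the edge {y(n), x(n)} of F(n) by a new vertex s and retract s onto y(n).
  The Fraisse property factors some bonding map F(m) \<rightarrow> F(n) through this retraction by an
  epimorphism g.  Then g sends x(m) and z(m) to x(n) and z(n), and g(y(m)) lies in the fibre
  {y(n), s}; but in the split graph y(n) is no longer adjacent to x(n), and s is adjacent only
  to y(n) and x(n), so g(y(m)) cannot be adjacent to both g(x(m)) and g(z(m)).\<close>

lemma epimorphism_edge:
  assumes "epimorphism g B A" "b1 \<in> verts B" "b2 \<in> verts B" "(b1, b2) \<in> edges B"
  shows "(g b1, g b2) \<in> edges A"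
proof -
  have "g b1 \<in> verts A" "g b2 \<in> verts A"
    using assms(1-3) unfolding epimorphism_def by auto
  then show ?thesis
    using assms unfolding epimorphism_def by blast
qed

lemma proj_fraisse_family_finite_graph:
  "proj_fraisse_family T D \<Longrightarrow> G \<in> T \<Longrightarrow> finite_graph G"
  by (simp add: proj_fraisse_family_def del: split_paired_All)

lemma proj_fraisse_family_epimorphism:
  "proj_fraisse_family T D \<Longrightarrow> D B A f \<Longrightarrow> epimorphism f B A"
  by (simp add: proj_fraisse_family_def del: split_paired_All)

lemma fraisse_sequence_in_family:
  "fraisse_sequence T D F fs \<Longrightarrow> F n \<in> T"
  by (simp add: fraisse_sequence_def)

lemma fraisse_sequence_extension:
  assumes "fraisse_sequence T D F fs" "D A (F m) f"
  obtains n g where "m \<le> n" "D (F n) A g" "\<forall>w\<in>verts (F n). f (g w) = fs n m w"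
proof -
  from assms(1) have "\<forall>A m f. D A (F m) f \<longrightarrow>
      (\<exists>n\<ge>m. \<exists>g. D (F n) A g \<and> (\<forall>w\<in>verts (F n). f (g w) = fs n m w))"
    unfolding fraisse_sequence_def by (elim conjE)
  then show thesis
    using assms(2) that by blast
qed

lemma allows_splitting_edgesE:
  assumes "allows_splitting_edges T D" "G \<in> T" "a \<in> verts G" "b \<in> verts G" "a \<noteq> b"
    "(a, b) \<in> edges G"
  obtains s where "s \<notin> verts G" "D (split_edge G a b s) G (\<lambda>v. if v = s then a else v)"
  using assms unfolding allows_splitting_edges_def by blast

lemma lim_verts_level: "x \<in> lim_verts F fs \<Longrightarrow> x n \<in> verts (F n)"
  unfolding lim_verts_def by blast

lemma lim_verts_bonding: "x \<in> lim_verts F fs \<Longrightarrow> n \<le> m \<Longrightarrow> fs m n (x m) = x n"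
  unfolding lim_verts_def by blast

lemma split_edge_fibre_not_common_neighbour:
  assumes "edges G \<subseteq> verts G \<times> verts G" "a \<in> verts G" "b \<in> verts G" "a \<noteq> b"
    "s \<notin> verts G" "c \<in> verts G" "c \<noteq> a" "c \<noteq> b" "v = a \<or> v = s"
  shows "(b, v) \<notin> edges (split_edge G a b s) \<or> (v, c) \<notin> edges (split_edge G a b s)"
  using assms unfolding split_edge_def edges_def by auto

lemma split_edge_no_lift_of_path:
  assumes G: "edges G \<subseteq> verts G \<times> verts G" "a \<in> verts G" "b \<in> verts G" "a \<noteq> b"
      "s \<notin> verts G"
    and g: "epimorphism g B (split_edge G a b s)"
    and factor: "\<forall>w\<in>verts B. (if g w = s then a else g w) = p w"
    and path: "{w1, w2, w3} \<subseteq> verts B" "(w1, w2) \<in> edges B" "(w2, w3) \<in> edges B"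
    and ends: "p w1 = b" "p w2 = a" "p w3 = c" "c \<in> verts G" "c \<noteq> a" "c \<noteq> b"
  shows False
proof -
  have fibre: "g w = p w \<or> g w = s \<and> p w = a" if "w \<in> verts B" for w
    using factor[rule_format, OF that] by (cases "g w = s") simp_all
  have "g w1 = b" "g w3 = c" "g w2 = a \<or> g w2 = s"
    using fibre path(1) ends G(4) by fastforce+
  moreover have "(g w1, g w2) \<in> edges (split_edge G a b s)" "(g w2, g w3) \<in> edges (split_edge G a b s)"
    using epimorphism_edge[OF g] path by auto
  ultimately show False
    using split_edge_fibre_not_common_neighbour[OF G ends(4-6)] by metis
qed

lemma lim_edges_refl_on:
  "(\<And>n. finite_graph (F n)) \<Longrightarrow> refl_on (lim_verts F fs) (lim_edges F fs)"
  unfolding refl_on_def lim_edges_def lim_verts_def finite_graph_def by auto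

lemma lim_edges_sym:
  "(\<And>n. finite_graph (F n)) \<Longrightarrow> sym (lim_edges F fs)"
  unfolding sym_def lim_edges_def finite_graph_def by blast

lemma fraisse_sequence_split_edge_blocks_paths:
  assumes family: "proj_fraisse_family T D"
    and splitting: "allows_splitting_edges T D"
    and seq: "fraisse_sequence T D F fs"
    and ab: "a \<in> verts (F n)" "b \<in> verts (F n)" "a \<noteq> b" "(a, b) \<in> edges (F n)"
    and c: "c \<in> verts (F n)" "c \<noteq> a" "c \<noteq> b"
  obtains m where "n \<le> m"
    "\<And>w1 w2 w3. {w1, w2, w3} \<subseteq> verts (F m) \<Longrightarrow> (w1, w2) \<in> edges (F m) \<Longrightarrow>
      (w2, w3) \<in> edges (F m) \<Longrightarrow> fs m n w1 = b \<Longrightarrow> fs m n w2 = a \<Longrightarrow> fs m n w3 = c \<Longrightarrow> False"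
proof -
  have Fn: "F n \<in> T" by (rule fraisse_sequence_in_family[OF seq])
  have edges_n: "edges (F n) \<subseteq> verts (F n) \<times> verts (F n)"
    using proj_fraisse_family_finite_graph[OF family Fn] unfolding finite_graph_def by blast
  obtain s where s: "s \<notin> verts (F n)"
    and retraction: "D (split_edge (F n) a b s) (F n) (\<lambda>v. if v = s then a else v)"
    by (rule allows_splitting_edgesE[OF splitting Fn ab])
  obtain m g where "n \<le> m" and g: "D (F m) (split_edge (F n) a b s) g"
    and factor: "\<forall>w\<in>verts (F m). (if g w = s then a else g w) = fs m n w"
    by (rule fraisse_sequence_extension[OF seq, OF retraction])
  have epi: "epimorphism g (F m) (split_edge (F n) a b s)"
    by (rule proj_fraisse_family_epimorphism[OF family, OF g])
  show thesis
  proof (rule that[OF \<open>n \<le> m\<close>])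
    fix w1 w2 w3
    assume path: "{w1, w2, w3} \<subseteq> verts (F m)" "(w1, w2) \<in> edges (F m)" "(w2, w3) \<in> edges (F m)"
      and ends: "fs m n w1 = b" "fs m n w2 = a" "fs m n w3 = c"
    show False
      by (rule split_edge_no_lift_of_path[OF edges_n ab(1-3) s epi factor path ends c])
  qed
qed

lemma lim_edges_trans:
  assumes family: "proj_fraisse_family T D"
    and splitting: "allows_splitting_edges T D"
    and seq: "fraisse_sequence T D F fs"
  shows "trans (lim_edges F fs)"
proof (rule transI)
  fix x y z
  assume "(x, y) \<in> lim_edges F fs" "(y, z) \<in> lim_edges F fs"
  then have threads: "x \<in> lim_verts F fs" "y \<in> lim_verts F fs" "z \<in> lim_verts F fs"
    and xy: "\<And>n. (x n, y n) \<in> edges (F n)" and yz: "\<And>n. (y n, z n) \<in> edges (F n)"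
    unfolding lim_edges_def by auto
  have "(x n, z n) \<in> edges (F n)" for n
  proof (rule ccontr)
    assume xz: "(x n, z n) \<notin> edges (F n)"
    have graph: "finite_graph (F n)"
      by (rule proj_fraisse_family_finite_graph[OF family fraisse_sequence_in_family[OF seq]])
    have verts_n: "x n \<in> verts (F n)" "y n \<in> verts (F n)" "z n \<in> verts (F n)"
      using threads[THEN lim_verts_level] by simp_all
    have distinct: "y n \<noteq> x n" "z n \<noteq> y n" "z n \<noteq> x n"
      using xz xy[of n] yz[of n] graph verts_n unfolding finite_graph_def by auto
    have yx: "(y n, x n) \<in> edges (F n)"
      using xy[of n] graph unfolding finite_graph_def by blast
    show False
    proof (rule fraisse_sequence_split_edge_blocks_paths[OF family splitting seq
          verts_n(2,1) distinct(1) yx verts_n(3) distinct(2,3)])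
      fix m
      assume "n \<le> m" and no_path:
        "\<And>w1 w2 w3. {w1, w2, w3} \<subseteq> verts (F m) \<Longrightarrow> (w1, w2) \<in> edges (F m) \<Longrightarrow>
          (w2, w3) \<in> edges (F m) \<Longrightarrow> fs m n w1 = x n \<Longrightarrow> fs m n w2 = y n \<Longrightarrow>
          fs m n w3 = z n \<Longrightarrow> False"
      show False
      proof (rule no_path)
        show "{x m, y m, z m} \<subseteq> verts (F m)"
          using threads[THEN lim_verts_level] by simp
        show "fs m n (x m) = x n" "fs m n (y m) = y n" "fs m n (z m) = z n"
          using threads[THEN lim_verts_bonding, OF \<open>n \<le> m\<close>] by simp_all
      qed (fact xy yz)+
    qed
  qed
  then show "(x, z) \<in> lim_edges F fs"
    using threads unfolding lim_edges_def by auto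
qed

theorem mainTheorem1:
  fixes T :: "'a graph set"
    and D :: "'a graph \<Rightarrow> 'a graph \<Rightarrow> ('a \<Rightarrow> 'a) \<Rightarrow> bool"
    and F :: "nat \<Rightarrow> 'a graph"
    and fs :: "nat \<Rightarrow> nat \<Rightarrow> 'a \<Rightarrow> 'a"
  assumes "proj_fraisse_family T D"
    and "allows_splitting_edges T D"
    and "fraisse_sequence T D F fs"
  shows "equiv (lim_verts F fs) (lim_edges F fs)"
proof (rule equivI)
  show "lim_edges F fs \<subseteq> lim_verts F fs \<times> lim_verts F fs"
    unfolding lim_edges_def by blast
  have graphs: "\<And>n. finite_graph (F n)"
    using assms(1) fraisse_sequence_in_family[OF assms(3)] by (rule proj_fraisse_family_finite_graph)
  show "refl_on (lim_verts F fs) (lim_edges F fs)"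
    by (rule lim_edges_refl_on[OF graphs])
  show "sym (lim_edges F fs)"
    by (rule lim_edges_sym[OF graphs])
  show "trans (lim_edges F fs)"
    using assms by (rule lim_edges_trans)
qed

end
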